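(* Let $\{|a_i\rangle\}$ and $\{|b_j\rangle\}$ be orthonormal bases of finite-dimensional systems $A$ and $B$, $n=\min\{\dim A,\dim B\}$, and let $\tau_{AB}=\sum_{i,j=1}^n\tau_{ij}|a_i\rangle\langle a_j|\otimes|b_i\rangle\langle b_j|$ be a state (a maximally correlated state). Let $\sigma_{AB}=\sum_{i=1}^n\tau_{ii}|a_i\rangle\langle a_i|\otimes|b_i\rangle\langle b_i|$. Then, with all $l_1$-norms computed in the basis $\{|a_i\rangle\otimes|b_j\rangle\}$, $$\|\tau_{AB}-\sigma_{AB}\|_{l_1}=\min_{\xi\in\mathcal{PPT}}\|\tau_{AB}-\xi\|_{l_1}=\min_{\xi\in\mathcal{SEP}}\|\tau_{AB}-\xi\|_{l_1}.$$
   Context: For a matrix $X$ and an orthonormal basis $\{|e_k\rangle\}$, $\|X\|_{l_1}=\sum_{k,l}|\langle e_k|X|e_l\rangle|$ (basis-dependent). $\mathcal{SEP}$ is the set of separable states on $A\otimes B$, i.e. convex combinations of product states $\tau_A\otimes\sigma_B$; $\mathcal{PPT}$ is the set of states on $A\otimes B$ whose partial transpose is positive semidefinite. *)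

theory Defs
  imports Complex_Main
begin

text \<open>Coordinates: the orthonormal bases are the standard bases; system A has basis
  indices 0..dA-1, system B has 0..dB-1, and A\<otimes>B has basis indices (i,j).
  Matrices on a system with index set S are functions S => S => complex that vanish
  outside S \<times> S.\<close>

definition hermitian_on :: "'i set \<Rightarrow> ('i \<Rightarrow> 'i \<Rightarrow> complex) \<Rightarrow> bool" where
  "hermitian_on S M \<longleftrightarrow> (\<forall>x\<in>S. \<forall>y\<in>S. M y x = cnj (M x y))"

definition psd_on :: "'i set \<Rightarrow> ('i \<Rightarrow> 'i \<Rightarrow> complex) \<Rightarrow> bool" where
  "psd_on S M \<longleftrightarrow> hermitian_on S M \<and>
     (\<forall>v :: 'i \<Rightarrow> complex. 0 \<le> Re (\<Sum>x\<in>S. \<Sum>y\<in>S. cnj (v x) * M x y * v y))"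

definition supported_on :: "'i set \<Rightarrow> ('i \<Rightarrow> 'i \<Rightarrow> complex) \<Rightarrow> bool" where
  "supported_on S M \<longleftrightarrow> (\<forall>x y. x \<notin> S \<or> y \<notin> S \<longrightarrow> M x y = 0)"

definition state_on :: "'i set \<Rightarrow> ('i \<Rightarrow> 'i \<Rightarrow> complex) \<Rightarrow> bool" where
  "state_on S M \<longleftrightarrow> supported_on S M \<and> psd_on S M \<and> (\<Sum>x\<in>S. M x x) = 1"

definition AB_idx :: "nat \<Rightarrow> nat \<Rightarrow> (nat \<times> nat) set" where
  "AB_idx dA dB = {..<dA} \<times> {..<dB}"

definition kron :: "(nat \<Rightarrow> nat \<Rightarrow> complex) \<Rightarrow> (nat \<Rightarrow> nat \<Rightarrow> complex)
    \<Rightarrow> (nat \<times> nat \<Rightarrow> nat \<times> nat \<Rightarrow> complex)" where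
  "kron X Y = (\<lambda>(i, j) (k, l). X i k * Y j l)"

definition ptrans_B :: "(nat \<times> nat \<Rightarrow> nat \<times> nat \<Rightarrow> complex) \<Rightarrow> (nat \<times> nat \<Rightarrow> nat \<times> nat \<Rightarrow> complex)" where
  "ptrans_B M = (\<lambda>(i, j) (k, l). M (i, l) (k, j))"

definition PPT :: "nat \<Rightarrow> nat \<Rightarrow> (nat \<times> nat \<Rightarrow> nat \<times> nat \<Rightarrow> complex) set" where
  "PPT dA dB = {\<xi>. state_on (AB_idx dA dB) \<xi> \<and> psd_on (AB_idx dA dB) (ptrans_B \<xi>)}"

definition SEP :: "nat \<Rightarrow> nat \<Rightarrow> (nat \<times> nat \<Rightarrow> nat \<times> nat \<Rightarrow> complex) set" where
  "SEP dA dB = {\<xi>. \<exists>(m::nat) (p::nat \<Rightarrow> real) \<rho>A \<rho>B.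
      (\<forall>k<m. 0 \<le> p k \<and> state_on {..<dA} (\<rho>A k) \<and> state_on {..<dB} (\<rho>B k)) \<and>
      (\<Sum>k<m. p k) = 1 \<and>
      \<xi> = (\<lambda>x y. \<Sum>k<m. complex_of_real (p k) * kron (\<rho>A k) (\<rho>B k) x y)}"

definition l1_norm :: "'i set \<Rightarrow> ('i \<Rightarrow> 'i \<Rightarrow> complex) \<Rightarrow> real" where
  "l1_norm S M = (\<Sum>x\<in>S. \<Sum>y\<in>S. cmod (M x y))"

end

theory Submission
  imports Defs
begin

text \<open>Write \<open>\<tau> = max_corr n t\<close>; then \<open>\<sigma>\<close> is its dephasing, and \<open>\<tau> - \<sigma>\<close> consists of the
  coherences \<open>t i j\<close> (\<open>i \<noteq> j\<close>) at the entries \<open>((i,i),(j,j))\<close>. For any \<open>\<xi>\<close>, the distance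
  \<open>\<parallel>\<tau> - \<xi>\<parallel>\<close> is at least the sum over \<open>i \<noteq> j\<close> of \<open>|t i j - \<xi> (i,i) (j,j)| + |\<xi> (i,j) (i,j)|\<close>,
  because \<open>\<tau>\<close> vanishes at \<open>((i,j),(i,j))\<close>. If \<open>\<xi>\<close> is PPT, the \<open>2 \<times> 2\<close> principal minor of its
  partial transpose at \<open>(i,j), (j,i)\<close> bounds the coherence \<open>|\<xi> (i,i) (j,j)|\<close> by the mean of the
  populations \<open>\<xi> (i,j) (i,j)\<close> and \<open>\<xi> (j,i) (j,i)\<close>; if \<open>\<xi>\<close> is separable, the same bound follows
  termwise from the \<open>2 \<times> 2\<close> minors of the product factors and AM-GM. Summing this bound
  symmetrically over \<open>i \<noteq> j\<close> and using the triangle inequality gives \<open>\<parallel>\<tau> - \<xi>\<parallel> \<ge> \<parallel>\<tau> - \<sigma>\<parallel>\<close>,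
  while \<open>\<sigma>\<close> is diagonal, hence both separable and PPT.\<close>

lemma quadratic_form_restrict:
  fixes M :: "'i \<Rightarrow> 'i \<Rightarrow> complex"
  assumes "finite S" "T \<subseteq> S" "\<And>x. x \<notin> T \<Longrightarrow> v x = 0"
  shows "(\<Sum>x\<in>S. \<Sum>y\<in>S. cnj (v x) * M x y * v y) = (\<Sum>x\<in>T. \<Sum>y\<in>T. cnj (v x) * M x y * v y)"
  using assms by (intro sum.mono_neutral_cong_right) (auto intro!: sum.mono_neutral_right)

lemma psd_on_diag:
  assumes "psd_on S M" "finite S" "x \<in> S"
  shows "Im (M x x) = 0" "0 \<le> Re (M x x)"
proof -
  have "M x x = cnj (M x x)" using assms(1,3) unfolding psd_on_def hermitian_on_def by blast
  then show "Im (M x x) = 0" by (simp add: complex_eq_iff)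
  define v where "v = (\<lambda>z. if z = x then 1 else 0 :: complex)"
  have "(\<Sum>a\<in>S. \<Sum>b\<in>S. cnj (v a) * M a b * v b) = M x x"
    using quadratic_form_restrict[OF assms(2), of "{x}" v M] assms(3) by (simp add: v_def)
  moreover have "0 \<le> Re (\<Sum>a\<in>S. \<Sum>b\<in>S. cnj (v a) * M a b * v b)"
    using assms(1) unfolding psd_on_def by blast
  ultimately show "0 \<le> Re (M x x)" by simp
qed

lemma psd_on_two_point_bound:
  fixes \<alpha> \<beta> :: real
  assumes "psd_on S M" "finite S" "x \<in> S" "y \<in> S" "x \<noteq> y"
  shows "2 * \<alpha> * \<beta> * cmod (M x y) \<le> \<alpha>\<^sup>2 * Re (M x x) + \<beta>\<^sup>2 * Re (M y y)"
proof -
  define m where "m = M x y"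
  define c where "c = (if m = 0 then 1 else cnj m / complex_of_real (cmod m))"
  \<comment> \<open>the phase making \<open>m * c\<close> real; test the form at \<open>\<alpha> e\<^sub>x - \<beta> c e\<^sub>y\<close>\<close>
  have phase: "m * c = cmod m" "cnj c * c = 1"
    using complex_norm_square[of m] by (auto simp: c_def power2_eq_square field_simps)
  have herm: "M y x = cnj m"
    using assms(1,3,4) unfolding psd_on_def hermitian_on_def m_def by blast
  define v where "v = (\<lambda>z. if z = x then complex_of_real \<alpha> else if z = y then - \<beta> * c else 0)"
  have "(\<Sum>a\<in>S. \<Sum>b\<in>S. cnj (v a) * M a b * v b) = (\<Sum>a\<in>{x, y}. \<Sum>b\<in>{x, y}. cnj (v a) * M a b * v b)"
    using assms(2-4) by (intro quadratic_form_restrict) (auto simp: v_def)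
  also have "\<dots> = \<alpha>\<^sup>2 * M x x - \<alpha> * \<beta> * (m * c + cnj (m * c)) + \<beta>\<^sup>2 * (cnj c * c) * M y y"
    using assms(5) by (simp add: v_def herm m_def[symmetric] power2_eq_square algebra_simps)
  finally have "(\<Sum>a\<in>S. \<Sum>b\<in>S. cnj (v a) * M a b * v b)
      = \<alpha>\<^sup>2 * M x x - 2 * \<alpha> * \<beta> * cmod m + \<beta>\<^sup>2 * M y y"
    unfolding phase by simp
  moreover have "0 \<le> Re (\<Sum>a\<in>S. \<Sum>b\<in>S. cnj (v a) * M a b * v b)"
    using assms(1) unfolding psd_on_def by blast
  ultimately show ?thesis unfolding m_def by simp
qed

lemma psd_on_offdiag_le_mean:
  assumes "psd_on S M" "finite S" "x \<in> S" "y \<in> S" "x \<noteq> y"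
  shows "cmod (M x y) \<le> (Re (M x x) + Re (M y y)) / 2"
  using psd_on_two_point_bound[OF assms, of 1 1] by simp

lemma psd_on_offdiag_sq_le:
  assumes "psd_on S M" "finite S" "x \<in> S" "y \<in> S" "x \<noteq> y"
  shows "(cmod (M x y))\<^sup>2 \<le> Re (M x x) * Re (M y y)"
proof -
  define a b r where "a = Re (M x x)" and "b = Re (M y y)" and "r = cmod (M x y)"
  have "0 \<le> r" "0 \<le> a" "0 \<le> b"
    using psd_on_diag(2)[OF assms(1,2)] assms(3,4) by (auto simp: a_def b_def r_def)
  \<comment> \<open>\<open>(\<alpha>, \<beta>) = (r, a)\<close> and \<open>(b, r)\<close> give \<open>a (a b - r\<^sup>2) \<ge> 0\<close> and \<open>b (a b - r\<^sup>2) \<ge> 0\<close>;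
    \<open>(1, 1)\<close> covers \<open>a = b = 0\<close>\<close>
  moreover have "2 * r \<le> a + b" "a * r\<^sup>2 \<le> a\<^sup>2 * b" "b * r\<^sup>2 \<le> b\<^sup>2 * a"
    using psd_on_two_point_bound[OF assms, of 1 1] psd_on_two_point_bound[OF assms, of r a]
      psd_on_two_point_bound[OF assms, of b r]
    by (simp_all add: a_def b_def r_def power2_eq_square algebra_simps)
  ultimately have "r\<^sup>2 \<le> a * b"
    by (cases "a = 0"; cases "b = 0") (auto simp: power2_eq_square mult_le_0_iff)
  then show ?thesis by (simp add: a_def b_def r_def)
qed

lemma mult_le_mean_of_cross_products:
  fixes r s a a' b b' :: real
  assumes "0 \<le> r" "0 \<le> s" "0 \<le> a" "0 \<le> a'" "0 \<le> b" "0 \<le> b'"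
    and "r\<^sup>2 \<le> a * a'" "s\<^sup>2 \<le> b * b'"
  shows "r * s \<le> (a * b' + a' * b) / 2"
proof -
  have "(r * s)\<^sup>2 \<le> (a * b') * (a' * b)"
    using assms mult_mono[OF assms(7,8)] by (simp add: power_mult_distrib ac_simps)
  then have "r * s \<le> sqrt ((a * b') * (a' * b))" by (rule real_le_rsqrt)
  also have "\<dots> \<le> (a * b' + a' * b) / 2" using assms by (intro arith_geo_mean_sqrt) auto
  finally show ?thesis .
qed

lemma psd_on_kron_offdiag_le_mean:
  assumes "psd_on S A" "psd_on T B" "finite S" "finite T" "i \<in> S" "j \<in> S" "i \<in> T" "j \<in> T" "i \<noteq> j"
  shows "cmod (A i j * B i j) \<le> (Re (A i i) * Re (B j j) + Re (A j j) * Re (B i i)) / 2"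
  unfolding norm_mult
  using assms psd_on_diag(2)[OF assms(1,3)] psd_on_diag(2)[OF assms(2,4)]
    psd_on_offdiag_sq_le[OF assms(1,3,5,6,9)] psd_on_offdiag_sq_le[OF assms(2,4,7,8,9)]
  by (intro mult_le_mean_of_cross_products) auto

lemma psd_on_diagonal:
  assumes "finite S" "\<And>x. x \<in> S \<Longrightarrow> Im (d x) = 0 \<and> 0 \<le> Re (d x)"
  shows "psd_on S (\<lambda>x y. if x = y then d x else 0)"
  unfolding psd_on_def hermitian_on_def
proof (intro conjI ballI allI)
  fix x y assume "x \<in> S" "y \<in> S"
  then show "(if y = x then d y else 0) = cnj (if x = y then d x else 0)"
    using assms(2) by (auto simp: complex_eq_iff)
next
  fix v :: "'a \<Rightarrow> complex"
  have "(\<Sum>x\<in>S. \<Sum>y\<in>S. cnj (v x) * (if x = y then d x else 0) * v y)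
      = (\<Sum>x\<in>S. of_real (Re (d x) * (cmod (v x))\<^sup>2))"
  proof (rule sum.cong)
    fix x assume "x \<in> S"
    have "(\<Sum>y\<in>S. cnj (v x) * (if x = y then d x else 0) * v y)
        = (\<Sum>y\<in>S. if x = y then d x * (v x * cnj (v x)) else 0)"
      by (intro sum.cong) auto
    also have "\<dots> = d x * (v x * cnj (v x))"
      using \<open>x \<in> S\<close> assms(1) by simp
    also have "\<dots> = of_real (Re (d x)) * of_real ((cmod (v x))\<^sup>2)"
      using \<open>x \<in> S\<close> assms(2) by (simp add: complex_norm_square[symmetric] complex_eq_iff)
    finally show "(\<Sum>y\<in>S. cnj (v x) * (if x = y then d x else 0) * v y) = of_real (Re (d x) * (cmod (v x))\<^sup>2)"
      by simp
  qed simp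
  then show "0 \<le> Re (\<Sum>x\<in>S. \<Sum>y\<in>S. cnj (v x) * (if x = y then d x else 0) * v y)"
    using assms(2) by (simp add: Re_sum sum_nonneg)
qed

lemma state_on_basis_proj:
  assumes "finite S" "k \<in> S"
  shows "state_on S (\<lambda>a b. if a = k \<and> b = k then 1 else 0)"
proof -
  have "(\<lambda>a b. if a = k \<and> b = k then 1 else 0) = (\<lambda>a b. if a = b then if a = k then 1 else 0 else 0 :: complex)"
    by (auto simp: fun_eq_iff)
  moreover have "psd_on S (\<lambda>a b. if a = b then if a = k then 1 else 0 else 0)"
    using assms(1) by (intro psd_on_diagonal) auto
  ultimately show ?thesis
    using assms unfolding state_on_def supported_on_def by auto
qed

definition dephase :: "('i \<Rightarrow> 'i \<Rightarrow> complex) \<Rightarrow> 'i \<Rightarrow> 'i \<Rightarrow> complex" where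
  "dephase M = (\<lambda>x y. if x = y then M x x else 0)"

lemma state_on_dephase:
  assumes "finite S" "state_on S M"
  shows "state_on S (dephase M)"
proof -
  have "psd_on S M" using assms(2) unfolding state_on_def by simp
  then have "psd_on S (dephase M)"
    unfolding dephase_def using psd_on_diag[OF _ assms(1)] by (intro psd_on_diagonal[OF assms(1)]) auto
  with assms(2) show ?thesis
    unfolding state_on_def supported_on_def by (auto simp: dephase_def)
qed

lemma ptrans_B_dephase: "ptrans_B (dephase M) = dephase M"
  by (auto simp: ptrans_B_def dephase_def fun_eq_iff)

lemma dephase_in_PPT:
  assumes "state_on (AB_idx dA dB) \<xi>"
  shows "dephase \<xi> \<in> PPT dA dB"
proof -
  have "state_on (AB_idx dA dB) (dephase \<xi>)"
    using assms by (intro state_on_dephase) (simp_all add: AB_idx_def)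
  then show ?thesis unfolding PPT_def state_on_def by (simp add: ptrans_B_dephase)
qed

lemma PPT_offdiag_le_mean:
  assumes "\<xi> \<in> PPT dA dB" "(i, j) \<in> AB_idx dA dB" "(j, i) \<in> AB_idx dA dB" "i \<noteq> j"
  shows "cmod (\<xi> (i, i) (j, j)) \<le> (Re (\<xi> (i, j) (i, j)) + Re (\<xi> (j, i) (j, i))) / 2"
proof -
  have "psd_on (AB_idx dA dB) (ptrans_B \<xi>)" using assms(1) unfolding PPT_def by simp
  from psd_on_offdiag_le_mean[OF this _ assms(2,3)] assms(4) show ?thesis
    by (simp add: AB_idx_def ptrans_B_def)
qed

lemma SEP_offdiag_le_mean:
  assumes "\<xi> \<in> SEP dA dB" "(i, j) \<in> AB_idx dA dB" "(j, i) \<in> AB_idx dA dB" "i \<noteq> j"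
  shows "cmod (\<xi> (i, i) (j, j)) \<le> (Re (\<xi> (i, j) (i, j)) + Re (\<xi> (j, i) (j, i))) / 2"
proof -
  obtain m :: nat and p A B where comp: "\<forall>k<m. 0 \<le> p k \<and> state_on {..<dA} (A k) \<and> state_on {..<dB} (B k)"
    and \<xi>: "\<xi> = (\<lambda>x y. \<Sum>k<m. complex_of_real (p k) * kron (A k) (B k) x y)"
    using assms(1) unfolding SEP_def mem_Collect_eq by blast
  have psd: "psd_on {..<dA} (A k)" "psd_on {..<dB} (B k)" if "k < m" for k
    using comp that unfolding state_on_def by auto
  have idx: "i < dA" "j < dA" "i < dB" "j < dB" using assms(2,3) by (auto simp: AB_idx_def)
  have "cmod (\<xi> (i, i) (j, j)) \<le> (\<Sum>k<m. cmod (of_real (p k) * (A k i j * B k i j)))"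
    unfolding \<xi> kron_def by (simp add: norm_sum)
  also have "\<dots> \<le> (\<Sum>k<m. p k * ((Re (A k i i) * Re (B k j j) + Re (A k j j) * Re (B k i i)) / 2))"
  proof (rule sum_mono)
    fix k assume "k \<in> {..<m}"
    then have p: "0 \<le> p k" and bound: "cmod (A k i j * B k i j)
        \<le> (Re (A k i i) * Re (B k j j) + Re (A k j j) * Re (B k i i)) / 2"
      using comp psd_on_kron_offdiag_le_mean[OF psd] idx assms(4) by auto
    then show "cmod (of_real (p k) * (A k i j * B k i j))
        \<le> p k * ((Re (A k i i) * Re (B k j j) + Re (A k j j) * Re (B k i i)) / 2)"
      using mult_left_mono[OF bound p] p by (simp add: norm_mult)
  qed
  also have "\<dots> = (Re (\<xi> (i, j) (i, j)) + Re (\<xi> (j, i) (j, i))) / 2"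
  proof -
    have "Re (\<xi> (a, b) (a, b)) = (\<Sum>k<m. p k * (Re (A k a a) * Re (B k b b)))" if "a < dA" for a b
      using psd_on_diag(1)[OF psd(1)] that unfolding \<xi> kron_def by (simp add: Re_sum)
    with idx show ?thesis
      by (simp add: sum_divide_distrib[symmetric] sum.distrib[symmetric] algebra_simps)
  qed
  finally show ?thesis .
qed

definition max_corr :: "nat \<Rightarrow> (nat \<Rightarrow> nat \<Rightarrow> complex) \<Rightarrow> nat \<times> nat \<Rightarrow> nat \<times> nat \<Rightarrow> complex" where
  "max_corr n t = (\<lambda>(i, i') (j, j'). if i = i' \<and> j = j' \<and> i < n \<and> j < n then t i j else 0)"

lemma trace_max_corr:
  assumes "n \<le> dA" "n \<le> dB"
  shows "(\<Sum>x\<in>AB_idx dA dB. max_corr n t x x) = (\<Sum>i<n. t i i)"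
proof -
  have "(\<Sum>x\<in>AB_idx dA dB. max_corr n t x x) = (\<Sum>i<dA. \<Sum>j<dB. if i = j \<and> i < n then t i i else 0)"
    unfolding AB_idx_def sum.cartesian_product by (intro sum.cong) (auto simp: max_corr_def)
  also have "\<dots> = (\<Sum>i<dA. if i < n then t i i else 0)"
    using assms by (intro sum.cong) (auto simp: sum.delta)
  also have "\<dots> = (\<Sum>i<n. t i i)"
    using assms by (simp add: sum.If_cases Int_absorb1 lessThan_subset_iff flip: lessThan_def)
  finally show ?thesis .
qed

lemma max_corr_state_diag:
  assumes "state_on (AB_idx dA dB) (max_corr n t)" "n \<le> dA" "n \<le> dB" "i < n"
  shows "Im (t i i) = 0" "0 \<le> Re (t i i)"
proof -
  have "psd_on (AB_idx dA dB) (max_corr n t)" using assms(1) unfolding state_on_def by simp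
  moreover have "(i, i) \<in> AB_idx dA dB" using assms(2-4) by (simp add: AB_idx_def)
  ultimately show "Im (t i i) = 0" "0 \<le> Re (t i i)"
    using psd_on_diag[of "AB_idx dA dB" "max_corr n t" "(i, i)"] assms(4)
    by (simp_all add: AB_idx_def max_corr_def)
qed

lemma dephase_max_corr_in_SEP:
  assumes "n \<le> dA" "n \<le> dB" "\<And>i. i < n \<Longrightarrow> Im (t i i) = 0 \<and> 0 \<le> Re (t i i)"
    and "(\<Sum>i<n. t i i) = 1"
  shows "dephase (max_corr n t) \<in> SEP dA dB"
proof -
  define e :: "nat \<Rightarrow> nat \<Rightarrow> nat \<Rightarrow> complex" where "e k = (\<lambda>a b. if a = k \<and> b = k then 1 else 0)" for k
  have "state_on {..<dA} (e k)" "state_on {..<dB} (e k)" if "k < n" for k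
    unfolding e_def using that assms(1,2) by (auto intro: state_on_basis_proj)
  moreover have "(\<Sum>k<n. Re (t k k)) = 1" using arg_cong[OF assms(4), of Re] by simp
  moreover have "dephase (max_corr n t) = (\<lambda>x y. \<Sum>k<n. of_real (Re (t k k)) * kron (e k) (e k) x y)"
  proof (intro ext)
    fix x y :: "nat \<times> nat"
    obtain i i' j j' where xy: "x = (i, i')" "y = (j, j')" by (cases x, cases y)
    have "(\<Sum>k<n. of_real (Re (t k k)) * kron (e k) (e k) x y)
        = (\<Sum>k<n. if k = i then (if i = i' \<and> i = j \<and> i = j' then t i i else 0) else 0)"
      using assms(3) by (intro sum.cong) (auto simp: xy kron_def e_def complex_eq_iff)
    then show "dephase (max_corr n t) x y = (\<Sum>k<n. of_real (Re (t k k)) * kron (e k) (e k) x y)"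
      by (auto simp: xy dephase_def max_corr_def)
  qed
  ultimately show ?thesis
    unfolding SEP_def mem_Collect_eq using assms(3)
    by (intro exI[of _ n] exI[of _ "\<lambda>k. Re (t k k)"] exI[of _ e] conjI allI impI) auto
qed

definition off_diag_pairs :: "nat \<Rightarrow> (nat \<times> nat) set" where
  "off_diag_pairs n = {(i, j). i < n \<and> j < n \<and> i \<noteq> j}"

lemma finite_off_diag_pairs: "finite (off_diag_pairs n)"
  by (rule finite_subset[of _ "{..<n} \<times> {..<n}"]) (auto simp: off_diag_pairs_def)

lemma sum_off_diag_pairs_swap:
  "(\<Sum>(i, j)\<in>off_diag_pairs n. f i j) = (\<Sum>(i, j)\<in>off_diag_pairs n. f j i)"
  by (rule sum.reindex_bij_witness[of _ prod.swap prod.swap]) (auto simp: off_diag_pairs_def)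

lemma l1_norm_ge_sum_entries:
  assumes "finite S" "inj_on e D" "e ` D \<subseteq> S \<times> S"
  shows "(\<Sum>p\<in>D. cmod (case_prod M (e p))) \<le> l1_norm S M"
proof -
  have "(\<Sum>p\<in>D. cmod (case_prod M (e p))) = (\<Sum>q\<in>e ` D. cmod (case_prod M q))"
    by (simp add: sum.reindex[OF assms(2)])
  also have "\<dots> \<le> (\<Sum>q\<in>S \<times> S. cmod (case_prod M q))"
    using assms by (intro sum_mono2) auto
  also have "\<dots> = l1_norm S M"
    unfolding l1_norm_def sum.cartesian_product by (simp add: case_prod_unfold)
  finally show ?thesis .
qed

lemma l1_norm_eq_sum_entries:
  assumes "finite S" "inj_on e D" "e ` D \<subseteq> S \<times> S"
    and "\<And>x y. x \<in> S \<Longrightarrow> y \<in> S \<Longrightarrow> (x, y) \<notin> e ` D \<Longrightarrow> M x y = 0"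
  shows "l1_norm S M = (\<Sum>p\<in>D. cmod (case_prod M (e p)))"
proof -
  have "l1_norm S M = (\<Sum>q\<in>S \<times> S. cmod (case_prod M q))"
    unfolding l1_norm_def sum.cartesian_product by (simp add: case_prod_unfold)
  also have "\<dots> = (\<Sum>q\<in>e ` D. cmod (case_prod M q))"
    using assms by (intro sum.mono_neutral_right) auto
  also have "\<dots> = (\<Sum>p\<in>D. cmod (case_prod M (e p)))"
    by (simp add: sum.reindex[OF assms(2)])
  finally show ?thesis .
qed

lemma l1_norm_max_corr_minus_dephase:
  assumes "n \<le> dA" "n \<le> dB"
  shows "l1_norm (AB_idx dA dB) (\<lambda>x y. max_corr n t x y - dephase (max_corr n t) x y)
    = (\<Sum>(i, j)\<in>off_diag_pairs n. cmod (t i j))"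
proof -
  have "l1_norm (AB_idx dA dB) (\<lambda>x y. max_corr n t x y - dephase (max_corr n t) x y)
      = (\<Sum>p\<in>off_diag_pairs n. cmod (case_prod (\<lambda>x y. max_corr n t x y - dephase (max_corr n t) x y)
          ((\<lambda>(i, j). ((i, i), (j, j))) p)))"
    using assms
    by (intro l1_norm_eq_sum_entries)
      (auto simp: AB_idx_def off_diag_pairs_def inj_on_def max_corr_def dephase_def image_iff
        split: if_splits)
  also have "\<dots> = (\<Sum>(i, j)\<in>off_diag_pairs n. cmod (t i j))"
    by (intro sum.cong) (auto simp: off_diag_pairs_def max_corr_def dephase_def)
  finally show ?thesis .
qed

lemma l1_norm_max_corr_minus_ge:
  assumes "n \<le> dA" "n \<le> dB"
  shows "(\<Sum>(i, j)\<in>off_diag_pairs n. cmod (t i j - \<xi> (i, i) (j, j)) + cmod (\<xi> (i, j) (i, j)))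
    \<le> l1_norm (AB_idx dA dB) (\<lambda>x y. max_corr n t x y - \<xi> x y)"
proof -
  let ?D = "off_diag_pairs n"
  define e :: "nat \<times> nat + nat \<times> nat \<Rightarrow> (nat \<times> nat) \<times> nat \<times> nat"
    where "e = case_sum (\<lambda>(i, j). ((i, i), (j, j))) (\<lambda>(i, j). ((i, j), (i, j)))"
  let ?M = "\<lambda>x y. max_corr n t x y - \<xi> x y"
  have "(\<Sum>(i, j)\<in>?D. cmod (t i j - \<xi> (i, i) (j, j)) + cmod (\<xi> (i, j) (i, j)))
      = (\<Sum>(i, j)\<in>?D. cmod (t i j - \<xi> (i, i) (j, j))) + (\<Sum>(i, j)\<in>?D. cmod (\<xi> (i, j) (i, j)))"
    by (simp add: case_prod_unfold sum.distrib)
  also have "\<dots> = (\<Sum>p\<in>?D <+> ?D. cmod (case_prod ?M (e p)))"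
    unfolding sum.Plus[OF finite_off_diag_pairs finite_off_diag_pairs]
    by (intro arg_cong2[where f = "(+)"] sum.cong) (auto simp: e_def off_diag_pairs_def max_corr_def)
  also have "\<dots> \<le> l1_norm (AB_idx dA dB) ?M"
    using assms
    by (intro l1_norm_ge_sum_entries) (auto simp: e_def inj_on_def off_diag_pairs_def AB_idx_def)
  finally show ?thesis .
qed

lemma l1_norm_max_corr_minus_dephase_le:
  assumes "n \<le> dA" "n \<le> dB"
    and offdiag: "\<And>i j. i < n \<Longrightarrow> j < n \<Longrightarrow> i \<noteq> j \<Longrightarrow>
      cmod (\<xi> (i, i) (j, j)) \<le> (Re (\<xi> (i, j) (i, j)) + Re (\<xi> (j, i) (j, i))) / 2"
  shows "l1_norm (AB_idx dA dB) (\<lambda>x y. max_corr n t x y - dephase (max_corr n t) x y)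
    \<le> l1_norm (AB_idx dA dB) (\<lambda>x y. max_corr n t x y - \<xi> x y)"
proof -
  let ?D = "off_diag_pairs n"
  have "(\<Sum>(i, j)\<in>?D. cmod (t i j))
      \<le> (\<Sum>(i, j)\<in>?D. cmod (t i j - \<xi> (i, i) (j, j))
            + (Re (\<xi> (i, j) (i, j)) + Re (\<xi> (j, i) (j, i))) / 2)"
  proof (rule sum_mono, clarify)
    fix i j assume "(i, j) \<in> ?D"
    then have "cmod (\<xi> (i, i) (j, j)) \<le> (Re (\<xi> (i, j) (i, j)) + Re (\<xi> (j, i) (j, i))) / 2"
      by (intro offdiag) (auto simp: off_diag_pairs_def)
    then show "cmod (t i j) \<le> cmod (t i j - \<xi> (i, i) (j, j))
        + (Re (\<xi> (i, j) (i, j)) + Re (\<xi> (j, i) (j, i))) / 2"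
      using norm_triangle_sub[of "t i j" "\<xi> (i, i) (j, j)"] by linarith
  qed
  also have "\<dots> = (\<Sum>(i, j)\<in>?D. cmod (t i j - \<xi> (i, i) (j, j)) + Re (\<xi> (i, j) (i, j)))"
    using sum_off_diag_pairs_swap[of "\<lambda>i j. Re (\<xi> (i, j) (i, j))" n]
    by (simp add: case_prod_unfold sum.distrib add_divide_distrib sum_divide_distrib[symmetric])
  also have "\<dots> \<le> (\<Sum>(i, j)\<in>?D. cmod (t i j - \<xi> (i, i) (j, j)) + cmod (\<xi> (i, j) (i, j)))"
    by (intro sum_mono) (auto simp: complex_Re_le_cmod)
  finally show ?thesis
    using l1_norm_max_corr_minus_dephase[OF assms(1,2), of t] l1_norm_max_corr_minus_ge[OF assms(1,2), of t \<xi>]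
    by linarith
qed

theorem theorem6:
  fixes dA dB n :: nat and t :: "nat \<Rightarrow> nat \<Rightarrow> complex"
    and \<tau> \<sigma> :: "nat \<times> nat \<Rightarrow> nat \<times> nat \<Rightarrow> complex"
  defines "n \<equiv> min dA dB"
  defines "\<tau> \<equiv> (\<lambda>(i, i') (j, j'). if i = i' \<and> j = j' \<and> i < n \<and> j < n then t i j else 0)"
  defines "\<sigma> \<equiv> (\<lambda>(i, i') (j, j'). if i = i' \<and> j = j' \<and> i = j \<and> i < n then t i i else 0)"
  assumes "state_on (AB_idx dA dB) \<tau>"
  shows "\<sigma> \<in> PPT dA dB \<and>
         (\<forall>\<xi>\<in>PPT dA dB. l1_norm (AB_idx dA dB) (\<lambda>x y. \<tau> x y - \<sigma> x y)
                          \<le> l1_norm (AB_idx dA dB) (\<lambda>x y. \<tau> x y - \<xi> x y)) \<and>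
         \<sigma> \<in> SEP dA dB \<and>
         (\<forall>\<xi>\<in>SEP dA dB. l1_norm (AB_idx dA dB) (\<lambda>x y. \<tau> x y - \<sigma> x y)
                          \<le> l1_norm (AB_idx dA dB) (\<lambda>x y. \<tau> x y - \<xi> x y))"
proof -
  have nA: "n \<le> dA" and nB: "n \<le> dB" unfolding n_def by simp_all
  have \<tau>: "\<tau> = max_corr n t" and \<sigma>: "\<sigma> = dephase (max_corr n t)"
    unfolding \<tau>_def \<sigma>_def max_corr_def dephase_def by (auto simp: fun_eq_iff)
  have state: "state_on (AB_idx dA dB) (max_corr n t)" using assms(4) unfolding \<tau> .
  have diag: "Im (t i i) = 0 \<and> 0 \<le> Re (t i i)" if "i < n" for i
    using max_corr_state_diag[OF state nA nB that] by blast
  have trace: "(\<Sum>i<n. t i i) = 1"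
    using state trace_max_corr[OF nA nB] unfolding state_on_def by simp
  have idx: "(i, j) \<in> AB_idx dA dB" if "i < n" "j < n" for i j
    using that nA nB by (simp add: AB_idx_def)
  show ?thesis
    unfolding \<tau> \<sigma>
    using dephase_in_PPT[OF state] dephase_max_corr_in_SEP[OF nA nB, of t, OF diag trace]
      l1_norm_max_corr_minus_dephase_le[OF nA nB] PPT_offdiag_le_mean SEP_offdiag_le_mean idx
    by meson
qed

end
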